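(* Let $r_1,\dots,r_k$ be positive integers, let $\Omega_1,\dots,\Omega_k$ be pairwise disjoint non-empty finite sets, and for each $i$ let $G_i\leq\mathrm{Sym}(\Omega_i)$ be a cyclic permutation group of order $r_i$. Then the internal direct product $G_1\cdot G_2\cdots G_k$, acting on $\Omega_1\cup\cdots\cup\Omega_k$, has the EKR property.
   Context: The internal direct product consists of the products $g_1\cdots g_k$ with $g_i\in G_i$, multiplied componentwise, acting on $\Omega=\bigcup\Omega_i$ by $x^{g_1\cdots g_k}=x^{g_i}$ for $x\in\Omega_i$. Two elements $\pi,\tau$ of a permutation group intersect if $\pi\tau^{-1}$ has a fixed point; a subset is intersecting if every pair intersects; the group has the EKR property if every intersecting subset has size at most the size of the largest point-stabilizer. *)

theory Defs
  imports "HOL-Combinatorics.Permutations"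
begin

definition perm_group :: "'a set \<Rightarrow> ('a \<Rightarrow> 'a) set \<Rightarrow> bool" where
  "perm_group \<Omega> G \<longleftrightarrow> G \<subseteq> {p. p permutes \<Omega>} \<and> id \<in> G \<and>
     (\<forall>p\<in>G. \<forall>q\<in>G. p \<circ> q \<in> G) \<and> (\<forall>p\<in>G. inv p \<in> G)"

definition cyclic_of_order :: "('a \<Rightarrow> 'a) set \<Rightarrow> nat \<Rightarrow> bool" where
  "cyclic_of_order G r \<longleftrightarrow> (\<exists>g\<in>G. G = range (\<lambda>n. g ^^ n)) \<and> card G = r"

definition int_dprod :: "'i set \<Rightarrow> ('i \<Rightarrow> 'a set) \<Rightarrow> ('i \<Rightarrow> ('a \<Rightarrow> 'a) set) \<Rightarrow> ('a \<Rightarrow> 'a) set" where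
  "int_dprod I \<Omega> G = {\<pi>. \<exists>g. (\<forall>i\<in>I. g i \<in> G i) \<and> (\<forall>i\<in>I. \<forall>x\<in>\<Omega> i. \<pi> x = g i x)
       \<and> (\<forall>x. x \<notin> (\<Union>i\<in>I. \<Omega> i) \<longrightarrow> \<pi> x = x)}"

text \<open>Right action: x^(\<pi> \<tau>^-1) = inv \<tau> (\<pi> x).\<close>
definition intersect :: "'a set \<Rightarrow> ('a \<Rightarrow> 'a) \<Rightarrow> ('a \<Rightarrow> 'a) \<Rightarrow> bool" where
  "intersect \<Omega> \<pi> \<tau> \<longleftrightarrow> (\<exists>x\<in>\<Omega>. (inv \<tau> \<circ> \<pi>) x = x)"

definition intersecting :: "'a set \<Rightarrow> ('a \<Rightarrow> 'a) set \<Rightarrow> bool" where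
  "intersecting \<Omega> S \<longleftrightarrow> (\<forall>\<pi>\<in>S. \<forall>\<tau>\<in>S. intersect \<Omega> \<pi> \<tau>)"

definition stabilizer :: "('a \<Rightarrow> 'a) set \<Rightarrow> 'a \<Rightarrow> ('a \<Rightarrow> 'a) set" where
  "stabilizer G x = {g \<in> G. g x = x}"

definition EKR_property :: "'a set \<Rightarrow> ('a \<Rightarrow> 'a) set \<Rightarrow> bool" where
  "EKR_property \<Omega> G \<longleftrightarrow>
     (\<forall>S. S \<subseteq> G \<and> intersecting \<Omega> S \<longrightarrow> card S \<le> Max ((\<lambda>x. card (stabilizer G x)) ` \<Omega>))"

end

theory Submission
  imports Defs
begin

text \<open>Let h be the element of the product that acts on each \<Omega> i as a generator of G i. Every
  element of the product moves each point within its orbit under the powers of h, and the product is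
  closed under left multiplication by powers of h. Choose x0 whose h-orbit has the least length m and
  write each \<pi> as h^j \<circ> \<sigma> with j < m and \<sigma> fixing x0. If two members of an intersecting family
  agree at x and share \<sigma>, then h^j and h^j' agree at \<sigma> x; as no h-orbit is shorter than m,
  j = j'. Hence \<pi> \<mapsto> \<sigma> embeds every intersecting family into the stabilizer of x0.\<close>

lemma permutes_funpow: "p permutes S \<Longrightarrow> p ^^ n permutes S"
  by (induction n) (simp_all add: permutes_compose)

lemma funpow_eq_on:
  assumes "\<And>y. y \<in> A \<Longrightarrow> f y = g y" "g ` A \<subseteq> A" "x \<in> A"
  shows "(f ^^ n) x = (g ^^ n) x"
proof -
  have "(g ^^ n) x \<in> A" for n
    by (induction n) (use assms(2,3) in auto)
  then show ?thesis
    by (induction n) (simp_all add: assms(1))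
qed

text \<open>The powers of p all permute the finite set S, so p has some finite order n, and
  p^((n - 1) j) inverts p^j.\<close>

lemma permutes_funpow_inverse:
  assumes "finite S" "p permutes S"
  obtains c where "p ^^ c \<circ> p ^^ j = id" "p ^^ j \<circ> p ^^ c = id"
proof -
  have "inj ((\<circ>) p)"
    using permutes_inj[OF assms(2)] by (simp add: inj_def fun_eq_iff)
  moreover have "{q. \<exists>n. q = ((\<circ>) p ^^ n) id} \<subseteq> {q. q permutes S}"
    using assms(2) by (auto simp: comp_funpow permutes_funpow)
  then have "finite {q. \<exists>n. q = ((\<circ>) p ^^ n) id}"
    using finite_permutations[OF assms(1)] by (rule finite_subset)
  ultimately obtain n where "0 < n" "((\<circ>) p ^^ n) id = id"
    by (rule funpow_inj_finite)
  then have "p ^^ n = id"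
    by (simp add: comp_funpow)
  moreover have "(n - 1) * j + j = n * j"
    using \<open>0 < n\<close> by (cases n) simp_all
  ultimately have "p ^^ ((n - 1) * j + j) = id"
    by (metis funpow_mult id_funpow)
  then show thesis
    by (intro that[of "(n - 1) * j"]) (simp_all flip: funpow_add add: add.commute)
qed

lemma permutes_exists_point_of_least_period:
  assumes "finite U" "U \<noteq> {}" "h permutes U"
  obtains x0 m where "x0 \<in> U" "0 < m" "(h ^^ m) x0 = x0"
    "\<And>y a b. y \<in> U \<Longrightarrow> a < m \<Longrightarrow> b < m \<Longrightarrow> (h ^^ a) y = (h ^^ b) y \<Longrightarrow> a = b"
proof -
  define period where "period y = (LEAST n. 0 < n \<and> (h ^^ n) y = y)" for y
  have "permutation h"
    using assms(1,3) by (rule permutes_imp_permutation)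
  have period: "0 < period y \<and> (h ^^ period y) y = y" for y
  proof -
    have "\<exists>n>0. (h ^^ n) y = y"
      using permutation_self[OF \<open>permutation h\<close>] by metis
    then show ?thesis
      unfolding period_def by (rule LeastI_ex)
  qed
  obtain x0 where x0: "x0 \<in> U" and least: "\<And>y. y \<in> U \<Longrightarrow> period x0 \<le> period y"
    using ex_has_least_nat[of "\<lambda>y. y \<in> U" _ period] assms(2) by blast
  have no_shorter_cycle: "a = b"
    if "y \<in> U" "a < period x0" "b < period x0" "(h ^^ a) y = (h ^^ b) y" "a \<le> b" for y a b
  proof (rule ccontr)
    assume "a \<noteq> b"
    have "(h ^^ a) ((h ^^ (b - a)) y) = (h ^^ a) y"
      using that(4,5) by (simp flip: funpow_add comp_apply[of "h ^^ a"])
    then have "(h ^^ (b - a)) y = y"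
      using inj_fn[OF permutes_inj[OF assms(3)]] by (simp add: inj_eq)
    then have "period y \<le> b - a"
      unfolding period_def using \<open>a \<le> b\<close> \<open>a \<noteq> b\<close> by (intro Least_le) simp
    then show False
      using least[OF \<open>y \<in> U\<close>] that(3) by linarith
  qed
  show thesis
  proof (rule that[OF x0])
    show "(h ^^ period x0) x0 = x0" "0 < period x0"
      using period by simp_all
  next
    fix y a b assume "y \<in> U" "a < period x0" "b < period x0" "(h ^^ a) y = (h ^^ b) y"
    then show "a = b"
      using no_shorter_cycle[of y a b] no_shorter_cycle[of y b a] by (cases "a \<le> b") simp_all
  qed
qed

lemma card_intersecting_le_card_stabilizer:
  assumes U: "finite U" "h permutes U"
    and P_permutes: "\<And>\<pi>. \<pi> \<in> P \<Longrightarrow> \<pi> permutes U"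
    and P_closed: "\<And>\<pi> n. \<pi> \<in> P \<Longrightarrow> h ^^ n \<circ> \<pi> \<in> P"
    and orbit: "\<And>\<pi>. \<pi> \<in> P \<Longrightarrow> \<exists>n. \<pi> x0 = (h ^^ n) x0"
    and period: "0 < m" "(h ^^ m) x0 = x0"
    and distinct: "\<And>y a b. y \<in> U \<Longrightarrow> a < m \<Longrightarrow> b < m \<Longrightarrow> (h ^^ a) y = (h ^^ b) y \<Longrightarrow> a = b"
    and S: "S \<subseteq> P" "intersecting U S"
  shows "card S \<le> card (stabilizer P x0)"
proof -
  have "\<exists>j<m. \<pi> x0 = (h ^^ j) x0" if "\<pi> \<in> P" for \<pi>
    using orbit[OF that] period by (metis funpow_mod_eq mod_less_divisor)
  then obtain j where j: "\<And>\<pi>. \<pi> \<in> P \<Longrightarrow> j \<pi> < m \<and> \<pi> x0 = (h ^^ j \<pi>) x0"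
    by metis
  have "\<exists>c. h ^^ c \<circ> h ^^ j \<pi> = id \<and> h ^^ j \<pi> \<circ> h ^^ c = id" for \<pi>
    using permutes_funpow_inverse[OF U] by metis
  then obtain c where c: "\<And>\<pi>. h ^^ c \<pi> \<circ> h ^^ j \<pi> = id" "\<And>\<pi>. h ^^ j \<pi> \<circ> h ^^ c \<pi> = id"
    by metis
  define \<sigma> where "\<sigma> \<pi> = h ^^ c \<pi> \<circ> \<pi>" for \<pi>
  have \<sigma>_stabilizer: "\<sigma> \<pi> \<in> stabilizer P x0" if "\<pi> \<in> P" for \<pi>
    using P_closed[OF that] j[OF that] c(1)[of \<pi>]
    unfolding stabilizer_def \<sigma>_def by (simp add: fun_eq_iff)
  have \<pi>_decomp: "\<pi> = h ^^ j \<pi> \<circ> \<sigma> \<pi>" for \<pi>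
    unfolding \<sigma>_def by (simp flip: comp_assoc add: c(2))
  have "inj_on \<sigma> S"
  proof (rule inj_onI)
    fix \<pi> \<tau> assume \<pi>: "\<pi> \<in> S" and \<tau>: "\<tau> \<in> S" and eq: "\<sigma> \<pi> = \<sigma> \<tau>"
    then have "\<pi> \<in> P" "\<tau> \<in> P"
      using S(1) by auto
    obtain x where x: "x \<in> U" "inv \<tau> (\<pi> x) = x"
      using S(2) \<pi> \<tau> unfolding intersecting_def intersect_def by auto
    have "\<pi> x = \<tau> x"
      using x(2) permutes_inv_eq[OF P_permutes[OF \<open>\<tau> \<in> P\<close>]] by simp
    then have "(h ^^ j \<pi>) (\<sigma> \<pi> x) = (h ^^ j \<tau>) (\<sigma> \<pi> x)"
      using \<pi>_decomp[of \<pi>] \<pi>_decomp[of \<tau>] eq by (metis comp_apply)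
    moreover have "\<sigma> \<pi> x \<in> U"
      using \<sigma>_stabilizer[OF \<open>\<pi> \<in> P\<close>] P_permutes x(1)
      unfolding stabilizer_def by (simp add: permutes_in_image)
    ultimately have "j \<pi> = j \<tau>"
      using distinct j \<open>\<pi> \<in> P\<close> \<open>\<tau> \<in> P\<close> by blast
    then show "\<pi> = \<tau>"
      using \<pi>_decomp[of \<pi>] \<pi>_decomp[of \<tau>] eq by metis
  qed
  moreover have "\<sigma> ` S \<subseteq> stabilizer P x0"
    using \<sigma>_stabilizer S(1) by blast
  moreover have "finite (stabilizer P x0)"
    using P_permutes unfolding stabilizer_def
    by (auto intro: finite_subset[OF _ finite_permutations[OF U(1)]])
  ultimately show ?thesis
    by (rule card_inj_on_le)
qed

lemma EKR_property_if_cyclic_orbits: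
  assumes U: "finite U" "U \<noteq> {}" "h permutes U"
    and P_permutes: "\<And>\<pi>. \<pi> \<in> P \<Longrightarrow> \<pi> permutes U"
    and P_closed: "\<And>\<pi> n. \<pi> \<in> P \<Longrightarrow> h ^^ n \<circ> \<pi> \<in> P"
    and orbits: "\<And>\<pi> x. \<pi> \<in> P \<Longrightarrow> x \<in> U \<Longrightarrow> \<exists>n. \<pi> x = (h ^^ n) x"
  shows "EKR_property U P"
  unfolding EKR_property_def
proof (intro allI impI)
  fix S assume S: "S \<subseteq> P \<and> intersecting U S"
  obtain x0 m where x0: "x0 \<in> U" "0 < m" "(h ^^ m) x0 = x0"
    and distinct: "\<And>y a b. y \<in> U \<Longrightarrow> a < m \<Longrightarrow> b < m \<Longrightarrow> (h ^^ a) y = (h ^^ b) y \<Longrightarrow> a = b"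
    using permutes_exists_point_of_least_period[OF U] by blast
  have "card S \<le> card (stabilizer P x0)"
    using S by (intro card_intersecting_le_card_stabilizer[of U h P x0 m])
      (simp_all add: U P_permutes P_closed orbits x0 distinct)
  also have "\<dots> \<le> Max ((\<lambda>x. card (stabilizer P x)) ` U)"
    using U(1) x0(1) by (intro Max_ge) auto
  finally show "card S \<le> Max ((\<lambda>x. card (stabilizer P x)) ` U)" .
qed

lemma perm_group_permutes: "perm_group \<Omega> G \<Longrightarrow> g \<in> G \<Longrightarrow> g permutes \<Omega>"
  unfolding perm_group_def by blast

lemma int_dprod_permutes:
  assumes disj: "disjoint_family_on \<Omega> I"
    and G: "\<And>i. i \<in> I \<Longrightarrow> perm_group (\<Omega> i) (G i)"
    and \<pi>: "\<pi> \<in> int_dprod I \<Omega> G"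
  shows "\<pi> permutes (\<Union>i\<in>I. \<Omega> i)"
proof -
  obtain g where g: "\<And>i. i \<in> I \<Longrightarrow> g i \<in> G i" "\<And>i x. i \<in> I \<Longrightarrow> x \<in> \<Omega> i \<Longrightarrow> \<pi> x = g i x"
    and fixes_outside: "\<And>x. x \<notin> (\<Union>i\<in>I. \<Omega> i) \<Longrightarrow> \<pi> x = x"
    using \<pi> unfolding int_dprod_def by blast
  have "bij_betw \<pi> (\<Omega> i) (\<Omega> i)" if "i \<in> I" for i
    using permutes_imp_bij[OF perm_group_permutes[OF G g(1)]] g(2) that
    by (metis bij_betw_cong)
  then have "bij_betw \<pi> (\<Union>i\<in>I. \<Omega> i) (\<Union>i\<in>I. \<Omega> i)"
    by (rule bij_betw_UNION_disjoint[OF disj])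
  then show ?thesis
    using fixes_outside by (rule bij_imp_permutes)
qed

lemma id_in_int_dprod:
  assumes "\<And>i. i \<in> I \<Longrightarrow> perm_group (\<Omega> i) (G i)"
  shows "id \<in> int_dprod I \<Omega> G"
  using assms unfolding int_dprod_def perm_group_def by (intro CollectI exI[of _ "\<lambda>_. id"]) auto

lemma int_dprod_comp:
  assumes G: "\<And>i. i \<in> I \<Longrightarrow> perm_group (\<Omega> i) (G i)"
    and "\<pi> \<in> int_dprod I \<Omega> G" "\<tau> \<in> int_dprod I \<Omega> G"
  shows "\<pi> \<circ> \<tau> \<in> int_dprod I \<Omega> G"
proof -
  obtain g where g: "\<And>i. i \<in> I \<Longrightarrow> g i \<in> G i" "\<And>i x. i \<in> I \<Longrightarrow> x \<in> \<Omega> i \<Longrightarrow> \<pi> x = g i x"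
    "\<And>x. x \<notin> (\<Union>i\<in>I. \<Omega> i) \<Longrightarrow> \<pi> x = x"
    using assms(2) unfolding int_dprod_def by blast
  obtain g' where g': "\<And>i. i \<in> I \<Longrightarrow> g' i \<in> G i" "\<And>i x. i \<in> I \<Longrightarrow> x \<in> \<Omega> i \<Longrightarrow> \<tau> x = g' i x"
    "\<And>x. x \<notin> (\<Union>i\<in>I. \<Omega> i) \<Longrightarrow> \<tau> x = x"
    using assms(3) unfolding int_dprod_def by blast
  have "g' i x \<in> \<Omega> i" if "i \<in> I" "x \<in> \<Omega> i" for i x
    using perm_group_permutes[OF G g'(1)] that by (simp add: permutes_in_image)
  moreover have "g i \<circ> g' i \<in> G i" if "i \<in> I" for i
    using G[OF that] g(1) g'(1) that unfolding perm_group_def by blast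
  ultimately show ?thesis
    unfolding int_dprod_def using g g' by (intro CollectI exI[of _ "\<lambda>i. g i \<circ> g' i"]) auto
qed

lemma funpow_in_int_dprod:
  assumes "\<And>i. i \<in> I \<Longrightarrow> perm_group (\<Omega> i) (G i)" "h \<in> int_dprod I \<Omega> G"
  shows "h ^^ n \<in> int_dprod I \<Omega> G"
  by (induction n) (auto simp only: funpow.simps intro: assms id_in_int_dprod int_dprod_comp)

lemma int_dprod_glue:
  assumes disj: "disjoint_family_on \<Omega> I" and g: "\<And>i. i \<in> I \<Longrightarrow> g i \<in> G i"
  obtains \<pi> where "\<pi> \<in> int_dprod I \<Omega> G" "\<And>i x. i \<in> I \<Longrightarrow> x \<in> \<Omega> i \<Longrightarrow> \<pi> x = g i x"
proof -
  define \<pi> where "\<pi> x = (if x \<in> (\<Union>i\<in>I. \<Omega> i) then g (SOME i. i \<in> I \<and> x \<in> \<Omega> i) x else x)" for x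
  have "\<pi> x = g i x" if "i \<in> I" "x \<in> \<Omega> i" for i x
  proof -
    have "(SOME i. i \<in> I \<and> x \<in> \<Omega> i) = i"
      using disj that by (intro some_equality) (auto simp: disjoint_family_on_def)
    then show ?thesis
      unfolding \<pi>_def using that by auto
  qed
  moreover have "\<pi> \<in> int_dprod I \<Omega> G"
    unfolding int_dprod_def using g calculation by (auto simp: \<pi>_def)
  ultimately show thesis
    using that by blast
qed

lemma int_dprod_cyclic_orbits:
  assumes G: "\<And>i. i \<in> I \<Longrightarrow> perm_group (\<Omega> i) (G i)"
    and cyclic: "\<And>i. i \<in> I \<Longrightarrow> G i = range (\<lambda>n. c i ^^ n)"
    and h: "\<And>i x. i \<in> I \<Longrightarrow> x \<in> \<Omega> i \<Longrightarrow> h x = c i x"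
    and \<pi>: "\<pi> \<in> int_dprod I \<Omega> G" and x: "x \<in> (\<Union>i\<in>I. \<Omega> i)"
  shows "\<exists>n. \<pi> x = (h ^^ n) x"
proof -
  obtain i where i: "i \<in> I" "x \<in> \<Omega> i"
    using x by blast
  obtain g where "g \<in> G i" "\<pi> x = g x"
    using \<pi> i unfolding int_dprod_def by blast
  moreover obtain n where "g = c i ^^ n"
    using \<open>g \<in> G i\<close> cyclic[OF i(1)] by blast
  moreover have "c i \<in> G i"
    using cyclic[OF i(1)] rangeI[of "\<lambda>n. c i ^^ n" 1] by simp
  then have "c i permutes \<Omega> i"
    by (rule perm_group_permutes[OF G[OF i(1)]])
  ultimately have "\<pi> x = (h ^^ n) x"
    using funpow_eq_on[of "\<Omega> i" h "c i" x n] h i by (simp add: permutes_image)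
  then show ?thesis ..
qed

theorem corollary19:
  fixes k :: nat and r :: "nat \<Rightarrow> nat" and \<Omega> :: "nat \<Rightarrow> 'a set"
    and G :: "nat \<Rightarrow> ('a \<Rightarrow> 'a) set"
  assumes "k \<ge> 1"
    and "\<And>i. i \<in> {1..k} \<Longrightarrow> r i > 0"
    and "\<And>i. i \<in> {1..k} \<Longrightarrow> finite (\<Omega> i) \<and> \<Omega> i \<noteq> {}"
    and "\<And>i j. i \<in> {1..k} \<Longrightarrow> j \<in> {1..k} \<Longrightarrow> i \<noteq> j \<Longrightarrow> \<Omega> i \<inter> \<Omega> j = {}"
    and "\<And>i. i \<in> {1..k} \<Longrightarrow> perm_group (\<Omega> i) (G i)"
    and "\<And>i. i \<in> {1..k} \<Longrightarrow> cyclic_of_order (G i) (r i)"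
  shows "EKR_property (\<Union>i\<in>{1..k}. \<Omega> i) (int_dprod {1..k} \<Omega> G)"
proof -
  have disj: "disjoint_family_on \<Omega> {1..k}"
    using assms(4) unfolding disjoint_family_on_def by blast
  obtain c where c: "\<And>i. i \<in> {1..k} \<Longrightarrow> c i \<in> G i \<and> G i = range (\<lambda>n. c i ^^ n)"
    using assms(6) unfolding cyclic_of_order_def by metis
  obtain h where h: "h \<in> int_dprod {1..k} \<Omega> G" "\<And>i x. i \<in> {1..k} \<Longrightarrow> x \<in> \<Omega> i \<Longrightarrow> h x = c i x"
    using int_dprod_glue[OF disj, of c G] c by blast
  show ?thesis
  proof (rule EKR_property_if_cyclic_orbits)
    show "finite (\<Union>i\<in>{1..k}. \<Omega> i)" "(\<Union>i\<in>{1..k}. \<Omega> i) \<noteq> {}"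
      using assms(1,3) by auto
    show "h permutes (\<Union>i\<in>{1..k}. \<Omega> i)"
      by (rule int_dprod_permutes[OF disj assms(5) h(1)])
    show "\<pi> permutes (\<Union>i\<in>{1..k}. \<Omega> i)" if "\<pi> \<in> int_dprod {1..k} \<Omega> G" for \<pi>
      by (rule int_dprod_permutes[OF disj assms(5) that])
    show "h ^^ n \<circ> \<pi> \<in> int_dprod {1..k} \<Omega> G" if "\<pi> \<in> int_dprod {1..k} \<Omega> G" for \<pi> n
      by (rule int_dprod_comp[OF assms(5) funpow_in_int_dprod[OF assms(5) h(1)] that])
    show "\<exists>n. \<pi> x = (h ^^ n) x"
      if "\<pi> \<in> int_dprod {1..k} \<Omega> G" "x \<in> (\<Union>i\<in>{1..k}. \<Omega> i)" for \<pi> x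
      using c by (intro int_dprod_cyclic_orbits[OF assms(5) _ h(2) that]) simp_all
  qed
qed

end
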